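(* For every $\alpha\in\mathbb{R}$, $t>0$ and $x\in\mathbb{R}$, $$\mathcal{H}_\alpha(x,t)=\mathscr{A}_{W_t}\{y^\alpha\}(x)=\left\langle \mathcal{L}^{-1}\{y^\alpha\}(u),\,e^{-ux-\frac{u^2}{2}t}\right\rangle .$$
   Context: $U(a,z)$ is the standard (Whittaker) parabolic cylinder function, $D_\nu(z)=U(-\nu-\tfrac12,z)$, and $\mathcal{H}_\alpha(x,t)=t^{\frac{\alpha}{2}}e^{\frac{x^2}{4t}}U(-\alpha-\tfrac12,\tfrac{x}{\sqrt t})$. $W$ is a Wiener process, so $\mathbf{E}e^{-uW_t}=e^{\frac{u^2}{2}t}$, and the Appell integral transform with respect to $W$ is $\mathscr{A}_{W_t}\{G\}(x)=\langle \mathcal{L}^{-1}G(u),e^{-ux-\frac{u^2}{2}t}\rangle$, where $\mathcal{L}^{-1}G$ is the generalised function supported on $[0,\infty)$ whose (distributional) Laplace transform $\langle \mathcal{L}^{-1}G(u),e^{-su}\rangle$ equals $G(s)$. Concretely, for $G(y)=y^\alpha$: if $\alpha<0$, $\mathcal{L}^{-1}\{y^\alpha\}(u)=\frac{u^{-\alpha-1}}{\Gamma(-\alpha)}$ for $u>0$ and $0$ for $u<0$; if $\alpha=n\in\mathbb{N}\cup\{0\}$, $\mathcal{L}^{-1}\{y^n\}=\delta^{(n)}$; if $\alpha>0$ is not an integer, $\mathcal{L}^{-1}\{y^\alpha\}={}^C\mathcal{D}^\alpha_{0+}\delta$, the Caputo fractional derivative of order $\alpha$ of the Dirac delta. *)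

theory Defs
  imports "HOL-Analysis.Analysis"
begin

definition kummerM :: "real \<Rightarrow> real \<Rightarrow> real \<Rightarrow> real" where
  "kummerM a b z = (\<Sum>k. pochhammer a k / pochhammer b k * z ^ k / fact k)"

text \<open>Whittaker's parabolic cylinder function U(a,z) for real a, z,
  via DLMF 12.4.1, 12.2.6, 12.2.7, 12.7.12, 12.7.13 (1/Gamma written as rGamma).\<close>
definition pcfU :: "real \<Rightarrow> real \<Rightarrow> real" where
  "pcfU a z =
     sqrt pi * rGamma (3/4 + a/2) / 2 powr (a/2 + 1/4)
       * (exp (-(z^2) / 4) * kummerM (a/2 + 1/4) (1/2) (z^2/2))
   - sqrt pi * rGamma (1/4 + a/2) / 2 powr (a/2 - 1/4)
       * (z * exp (-(z^2) / 4) * kummerM (a/2 + 3/4) (3/2) (z^2/2))"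

definition calH :: "real \<Rightarrow> real \<Rightarrow> real \<Rightarrow> real" where
  "calH \<alpha> x t = t powr (\<alpha>/2) * exp (x^2 / (4*t)) * pcfU (-\<alpha> - 1/2) (x / sqrt t)"

text \<open>The action of the generalised function \<open>\<L>\<^sup>-\<^sup>1{y^\<alpha>}\<close> on a function \<open>\<phi>\<close>:
  for \<alpha> < 0 the locally integrable function u^(-\<alpha>-1)/Gamma(-\<alpha>) on (0,\<infinity>);
  for \<alpha> = n \<in> \<nat> the distribution \<delta>^(n), i.e. (-1)^n \<phi>^(n)(0);
  for non-integer \<alpha> > 0 the Caputo derivative of \<delta> of order \<alpha>, acting by transposition:
  <D^\<alpha> \<delta>, \<phi>> = (-1)^n/Gamma(n-\<alpha>) * int_0^\<infinity> u^(n-\<alpha>-1) \<phi>^(n)(u) du with n = ceiling \<alpha>.\<close>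
definition inv_laplace_pow_pair :: "real \<Rightarrow> (real \<Rightarrow> real) \<Rightarrow> real" where
  "inv_laplace_pow_pair \<alpha> \<phi> =
    (if \<alpha> < 0 then (LBINT u:{0<..}. u powr (-\<alpha> - 1) * \<phi> u) / Gamma (-\<alpha>)
     else if \<alpha> \<in> \<nat> then (-1) ^ nat \<lfloor>\<alpha>\<rfloor> * (deriv ^^ nat \<lfloor>\<alpha>\<rfloor>) \<phi> 0
     else (let n = nat \<lceil>\<alpha>\<rceil> in
            (-1) ^ n / Gamma (real n - \<alpha>)
              * (LBINT u:{0<..}. u powr (real n - \<alpha> - 1) * (deriv ^^ n) \<phi> u)))"

definition appell_W_pow :: "real \<Rightarrow> real \<Rightarrow> real \<Rightarrow> real" where
  "appell_W_pow \<alpha> t x = inv_laplace_pow_pair \<alpha> (\<lambda>u. exp (- u * x - u^2 / 2 * t))"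

end

theory Submission
  imports Defs "HOL-Computational_Algebra.Polynomial"
begin

text \<open>
  Expanding the two Kummer functions in \<open>U\<close> turns \<open>\<H>\<^sub>\<alpha>(x, t)\<close> into a power series in \<open>x\<close>
  whose coefficients satisfy the three-term relation behind
  \<open>\<H>\<^sub>\<alpha> = x \<H>\<^sub>\<alpha>\<^sub>-\<^sub>1 - t \<partial>\<^sub>x \<H>\<^sub>\<alpha>\<^sub>-\<^sub>1\<close>.
  For \<open>\<alpha> = -s < 0\<close> one expands \<open>e\<^sup>-\<^sup>u\<^sup>x\<close> in the pairing
  \<open>\<integral>\<^sub>0\<^sup>\<infinity> u\<^sup>s\<^sup>-\<^sup>1 e\<^sup>-\<^sup>u\<^sup>x\<^sup>-\<^sup>u\<^sup>2\<^sup>t\<^sup>/\<^sup>2 du\<close> and integrates term by term (dominated convergence)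
  against Gaussian moments; Legendre's duplication formula identifies the result with
  \<open>\<Gamma>(s) \<H>\<^sub>-\<^sub>s(x, t)\<close>.
  The \<open>n\<close>-th derivative of the kernel \<open>\<phi>(u) = e\<^sup>-\<^sup>u\<^sup>x\<^sup>-\<^sup>u\<^sup>2\<^sup>t\<^sup>/\<^sup>2\<close> is \<open>P\<^sub>n(x + t u) \<phi>(u)\<close> with
  \<open>P\<^sub>n\<^sub>+\<^sub>1 = t P\<^sub>n' - X P\<^sub>n\<close>, the same recurrence again. Starting from \<open>\<H>\<^sub>0 = 1\<close> this gives
  the case \<open>\<alpha> \<in> \<nat>\<close>, and starting from the case \<open>-\<beta>\<close> it gives the Caputo pairing for
  \<open>\<alpha> = n - \<beta>\<close>, \<open>0 < \<beta> < 1\<close>, after differentiating under the integral sign.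
\<close>

section \<open>Power series of \<open>\<H>\<^sub>\<alpha>\<close> and the recurrence in \<open>\<alpha>\<close>\<close>

lemma pochhammer_half_mult_fact: "pochhammer (1/2::real) m * fact m * 4^m = fact (2*m)"
proof (induction m)
  case (Suc m)
  have "pochhammer (1/2::real) (Suc m) * fact (Suc m) * 4^(Suc m)
      = (pochhammer (1/2) m * fact m * 4^m) * ((1/2 + m) * (m+1) * 4)"
    by (simp add: pochhammer_rec' algebra_simps)
  also have "\<dots> = fact (2*m) * ((2*m+1)*(2*m+2))" using Suc by (simp add: algebra_simps)
  also have "\<dots> = fact (2 * Suc m)" by (simp add: algebra_simps)
  finally show ?case .
qed simp

lemma pochhammer_three_halves_mult_fact: "pochhammer (3/2::real) m * fact m * 4^m = fact (2*m+1)"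
proof (induction m)
  case (Suc m)
  have "pochhammer (3/2::real) (Suc m) * fact (Suc m) * 4^(Suc m)
      = (pochhammer (3/2) m * fact m * 4^m) * ((3/2 + m) * (m+1) * 4)"
    by (simp add: pochhammer_rec' algebra_simps)
  also have "\<dots> = fact (2*m+1) * ((2*m+2)*(2*m+3))" unfolding Suc.IH by (simp add: field_simps)
  also have "\<dots> = fact (2 * Suc m + 1)" by (simp add: algebra_simps)
  finally show ?case .
qed simp

lemma summable_kummerM_series:
  fixes a b z :: real
  assumes b: "b > 0"
  shows "summable (\<lambda>k. pochhammer a k / pochhammer b k * z^k / fact k)"
proof (rule summable_ratio_test[where c="1/2" and N="nat \<lceil>2 * ((\<bar>a\<bar>/b + 1) * \<bar>z\<bar>)\<rceil>"])
  fix n :: nat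
  assume n: "n \<ge> nat \<lceil>2 * ((\<bar>a\<bar>/b + 1) * \<bar>z\<bar>)\<rceil>"
  define K where "K = (\<bar>a\<bar>/b + 1) * \<bar>z\<bar>"
  have K: "2 * K \<le> real n + 1" using n unfolding K_def by linarith
  have bn: "b + real n > 0" using b by simp
  have ratio: "pochhammer a (Suc n) / pochhammer b (Suc n) * z^(Suc n) / fact (Suc n)
      = (pochhammer a n / pochhammer b n * z^n / fact n) * ((a + real n) / (b + real n) * z / (real n + 1))"
    using b bn by (simp add: pochhammer_rec' pochhammer_pos field_simps)
  have "(\<bar>a\<bar>/b + 1) * (b + real n) = \<bar>a\<bar> + real n + b + \<bar>a\<bar> / b * real n"
    using b by (simp add: field_simps)
  moreover have "0 \<le> \<bar>a\<bar> / b * real n" using b by simp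
  ultimately have "\<bar>a + real n\<bar> \<le> (\<bar>a\<bar>/b + 1) * (b + real n)"
    using b abs_triangle_ineq[of a "real n"] by linarith
  then have "\<bar>a + real n\<bar> / (b + real n) * \<bar>z\<bar> \<le> K"
    unfolding K_def using bn by (intro mult_right_mono) (auto simp: divide_le_eq)
  then have "\<bar>a + real n\<bar> / (b + real n) * \<bar>z\<bar> / (real n + 1) \<le> K / (real n + 1)"
    by (rule divide_right_mono) simp
  also have "\<dots> \<le> 1/2"
    using K by (simp add: divide_le_eq)
  finally have "\<bar>a + real n\<bar> / (b + real n) * \<bar>z\<bar> / (real n + 1) \<le> 1/2" .
  then have "\<bar>(a + real n) / (b + real n) * z / (real n + 1)\<bar> \<le> 1/2"
    using bn by (simp add: abs_mult abs_divide)
  then have "norm (pochhammer a n / pochhammer b n * z^n / fact n)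
        * \<bar>(a + real n) / (b + real n) * z / (real n + 1)\<bar>
      \<le> norm (pochhammer a n / pochhammer b n * z^n / fact n) * (1/2)"
    by (rule mult_left_mono) simp
  then show "norm (pochhammer a (Suc n) / pochhammer b (Suc n) * z^(Suc n) / fact (Suc n))
      \<le> 1/2 * norm (pochhammer a n / pochhammer b n * z^n / fact n)"
    unfolding ratio real_norm_def abs_mult by (simp only: mult.commute)
qed simp

lemma sums_even_odd:
  fixes f :: "nat \<Rightarrow> 'a::real_normed_vector"
  assumes "(\<lambda>m. f (2*m)) sums A" "(\<lambda>m. f (2*m+1)) sums B"
  shows "f sums (A + B)"
proof -
  define fe where "fe k = (if even k then f k else 0)" for k
  define fo where "fo k = (if odd k then f k else 0)" for k
  have "(\<lambda>m. fe (2*m)) sums A" using assms(1) by (simp add: fe_def)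
  then have "fe sums A"
    by (subst (asm) sums_mono_reindex) (auto simp: strict_mono_def fe_def elim!: evenE)
  moreover have "(\<lambda>m. fo (2*m+1)) sums B" using assms(2) by (simp add: fo_def)
  then have "fo sums B"
    by (subst (asm) sums_mono_reindex) (auto simp: strict_mono_def fo_def elim!: oddE)
  moreover have "f = (\<lambda>k. fe k + fo k)" by (auto simp: fe_def fo_def)
  ultimately show ?thesis using sums_add by metis
qed

definition calH_const_even :: "real \<Rightarrow> real" where
  "calH_const_even \<alpha> = sqrt pi * 2 powr (\<alpha>/2) * rGamma ((1 - \<alpha>)/2)"

definition calH_const_odd :: "real \<Rightarrow> real" where
  "calH_const_odd \<alpha> = - sqrt pi * 2 powr ((\<alpha> + 1)/2) * rGamma (-\<alpha>/2)"

definition calH_coeff :: "real \<Rightarrow> nat \<Rightarrow> real" where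
  "calH_coeff \<alpha> k =
     (if even k then calH_const_even \<alpha> * pochhammer (-\<alpha>/2) (k div 2)
      else calH_const_odd \<alpha> * pochhammer ((1 - \<alpha>)/2) (k div 2)) * 2 ^ (k div 2) / fact k"

lemma calH_coeff_even:
  "calH_coeff \<alpha> (2*m) = calH_const_even \<alpha> * pochhammer (-\<alpha>/2) m * 2^m / fact (2*m)"
  by (simp add: calH_coeff_def)

lemma calH_coeff_odd:
  "calH_coeff \<alpha> (2*m+1) = calH_const_odd \<alpha> * pochhammer ((1 - \<alpha>)/2) m * 2^m / fact (2*m+1)"
  by (simp add: calH_coeff_def)

lemma exp_mult_pcfU_eq:
  "exp (z^2/4) * pcfU (-\<alpha> - 1/2) z =
     calH_const_even \<alpha> * kummerM (-\<alpha>/2) (1/2) (z^2/2)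
     + calH_const_odd \<alpha> * z * kummerM ((1 - \<alpha>)/2) (3/2) (z^2/2)"
proof -
  have params: "3/4 + (-\<alpha> - 1/2)/2 = (1 - \<alpha>)/2" "(-\<alpha> - 1/2)/2 + 1/4 = -(\<alpha>/2)"
    "1/4 + (-\<alpha> - 1/2)/2 = -\<alpha>/2" "(-\<alpha> - 1/2)/2 - 1/4 = -((\<alpha> + 1)/2)"
    "(-\<alpha> - 1/2)/2 + 3/4 = (1 - \<alpha>)/2"
    by (simp_all add: field_simps)
  show ?thesis
    unfolding pcfU_def params calH_const_even_def calH_const_odd_def
    by (simp add: exp_minus powr_minus_divide field_simps)
qed

lemma half_square_power: "((z::real)^2/2)^m = z^(2*m) / (2^m)"
  by (simp add: power_divide power_mult)

lemma calH_coeff_even_eq_kummer_term: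
  "calH_const_even \<alpha> * (pochhammer (-\<alpha>/2) m / pochhammer (1/2) m * (z^2/2)^m / fact m)
    = calH_coeff \<alpha> (2*m) * z^(2*m)"
proof -
  have half: "pochhammer (1/2::real) m * fact m = fact (2*m) / (2^m * 2^m)"
    using pochhammer_half_mult_fact[of m] by (simp add: field_simps flip: power_mult_distrib)
  have "pochhammer (-\<alpha>/2) m / pochhammer (1/2) m * (z^2/2)^m / fact m
      = pochhammer (-\<alpha>/2) m * (z^2/2)^m / (pochhammer (1/2) m * fact m)"
    by simp
  also have "\<dots> = pochhammer (-\<alpha>/2) m * 2^m / fact (2*m) * z^(2*m)"
    unfolding half half_square_power by (simp add: field_simps)
  finally show ?thesis
    by (simp add: calH_coeff_even)
qed

lemma calH_coeff_odd_eq_kummer_term: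
  "calH_const_odd \<alpha> * z * (pochhammer ((1 - \<alpha>)/2) m / pochhammer (3/2) m * (z^2/2)^m / fact m)
    = calH_coeff \<alpha> (2*m+1) * z^(2*m+1)"
proof -
  have three_halves: "pochhammer (3/2::real) m * fact m = fact (2*m+1) / (2^m * 2^m)"
    using pochhammer_three_halves_mult_fact[of m] by (simp add: field_simps flip: power_mult_distrib)
  have "pochhammer ((1 - \<alpha>)/2) m / pochhammer (3/2) m * (z^2/2)^m / fact m
      = pochhammer ((1 - \<alpha>)/2) m * (z^2/2)^m / (pochhammer (3/2) m * fact m)"
    by simp
  also have "\<dots> = pochhammer ((1 - \<alpha>)/2) m * 2^m / fact (2*m+1) * z^(2*m)"
    unfolding three_halves half_square_power by (simp add: field_simps)
  finally show ?thesis
    unfolding calH_coeff_odd by (simp add: mult_ac)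
qed

lemma calH_coeff_sums:
  "(\<lambda>k. calH_coeff \<alpha> k * z^k) sums (exp (z^2/4) * pcfU (-\<alpha> - 1/2) z)"
proof -
  have "(\<lambda>m. calH_const_even \<alpha> * (pochhammer (-\<alpha>/2) m / pochhammer (1/2) m * (z^2/2)^m / fact m))
      sums (calH_const_even \<alpha> * kummerM (-\<alpha>/2) (1/2) (z^2/2))"
    unfolding kummerM_def by (intro sums_mult summable_sums summable_kummerM_series) simp
  then have even: "(\<lambda>m. calH_coeff \<alpha> (2*m) * z^(2*m)) sums (calH_const_even \<alpha> * kummerM (-\<alpha>/2) (1/2) (z^2/2))"
    by (simp only: calH_coeff_even_eq_kummer_term)
  have "(\<lambda>m. calH_const_odd \<alpha> * z * (pochhammer ((1 - \<alpha>)/2) m / pochhammer (3/2) m * (z^2/2)^m / fact m))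
      sums (calH_const_odd \<alpha> * z * kummerM ((1 - \<alpha>)/2) (3/2) (z^2/2))"
    unfolding kummerM_def by (intro sums_mult summable_sums summable_kummerM_series) simp
  then have odd: "(\<lambda>m. calH_coeff \<alpha> (2*m+1) * z^(2*m+1)) sums (calH_const_odd \<alpha> * z * kummerM ((1 - \<alpha>)/2) (3/2) (z^2/2))"
    by (simp only: calH_coeff_odd_eq_kummer_term)
  show ?thesis
    unfolding exp_mult_pcfU_eq using sums_even_odd[OF even odd] .
qed

lemma powr_half_diff_eq:
  assumes "t > 0"
  shows "t powr ((\<alpha> - real k)/2) = t powr (\<alpha>/2) / sqrt t ^ k"
proof -
  have "sqrt t ^ k = t powr (real k / 2)"
    using assms by (simp add: powr_half_sqrt [symmetric] powr_realpow [symmetric] powr_powr)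
  then show ?thesis
    using assms by (simp add: diff_divide_distrib powr_diff)
qed

lemma calH_sums:
  assumes t: "t > 0"
  shows "(\<lambda>k. calH_coeff \<alpha> k * t powr ((\<alpha> - real k)/2) * x^k) sums calH \<alpha> x t"
proof -
  define z where "z = x / sqrt t"
  have "x^2 / (4*t) = z^2/4"
    using t by (simp add: z_def power_divide)
  then have "calH \<alpha> x t = t powr (\<alpha>/2) * (exp (z^2/4) * pcfU (-\<alpha> - 1/2) z)"
    by (simp add: calH_def z_def)
  moreover have "(\<lambda>k. t powr (\<alpha>/2) * (calH_coeff \<alpha> k * z^k))
      = (\<lambda>k. calH_coeff \<alpha> k * t powr ((\<alpha> - real k)/2) * x^k)"
    using t by (simp add: powr_half_diff_eq z_def power_divide mult_ac)
  ultimately show ?thesis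
    using sums_mult[OF calH_coeff_sums, of "t powr (\<alpha>/2)" \<alpha> z] by simp
qed

lemma calH_const_odd_pred: "calH_const_odd (\<alpha> - 1) = - calH_const_even \<alpha>"
proof -
  have "-(\<alpha> - 1)/2 = (1 - \<alpha>)/2" "(\<alpha> - 1 + 1)/2 = \<alpha>/2" by (simp_all add: field_simps)
  then show ?thesis unfolding calH_const_odd_def calH_const_even_def by simp
qed

lemma calH_const_odd_eq: "calH_const_odd \<alpha> = \<alpha> * calH_const_even (\<alpha> - 1)"
proof -
  have "(2::real) powr ((\<alpha> + 1)/2) = 2 powr (1 + (\<alpha> - 1)/2)"
    by (simp add: field_simps)
  then have two: "(2::real) powr ((\<alpha> + 1)/2) = 2 * 2 powr ((\<alpha> - 1)/2)"
    by (simp add: powr_add)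
  have "(1 - (\<alpha> - 1))/2 = -\<alpha>/2 + 1"
    by (simp add: field_simps)
  then have rec: "rGamma (-\<alpha>/2) = (-\<alpha>/2) * rGamma ((1 - (\<alpha> - 1))/2)"
    by (metis rGamma_plus1)
  show ?thesis
    unfolding calH_const_odd_def calH_const_even_def two rec by (simp add: algebra_simps)
qed

lemma calH_coeff_rec_even:
  "calH_coeff \<alpha> (2*j+2) = calH_coeff (\<alpha> - 1) (2*j+1) - diffs (calH_coeff (\<alpha> - 1)) (2*j+2)"
proof -
  define c where "c = 1 - \<alpha>/2"
  define P where "P = pochhammer c j"
  define F where "F = (fact (2*j+1) :: real)"
  define D where "D = 2 * real j + 2"
  define N where "N = real (2 * Suc j + 1)"
  have pos: "F > 0" "D > 0" "N > 0" by (simp_all add: F_def D_def N_def)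
  have "(1 - (\<alpha> - 1))/2 = c" by (simp add: c_def field_simps)
  then have shifted: "calH_coeff (\<alpha> - 1) (2*i+1) = - calH_const_even \<alpha> * pochhammer c i * 2^i / fact (2*i+1)" for i
    unfolding calH_coeff_odd calH_const_odd_pred by simp
  have lhs: "calH_coeff \<alpha> (2*j+2) = calH_const_even \<alpha> * ((c - 1) * P) * (2 * 2^j) / (D * F)"
    using calH_coeff_even[of \<alpha> "Suc j"] by (simp add: P_def F_def D_def c_def pochhammer_rec algebra_simps)
  have succ: "calH_coeff (\<alpha> - 1) (2 * Suc j + 1) = - calH_const_even \<alpha> * (P * (c + j)) * (2 * 2^j) / (N * (D * F))"
    unfolding shifted by (simp add: P_def F_def D_def N_def pochhammer_rec' algebra_simps)
  have "diffs (calH_coeff (\<alpha> - 1)) (2*j+2) = N * calH_coeff (\<alpha> - 1) (2 * Suc j + 1)"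
    by (simp add: diffs_def N_def)
  also have "\<dots> = - calH_const_even \<alpha> * (P * (c + j)) * (2 * 2^j) / (D * F)"
    unfolding succ using pos by simp
  finally have diff: "diffs (calH_coeff (\<alpha> - 1)) (2*j+2) = - calH_const_even \<alpha> * (P * (c + j)) * (2 * 2^j) / (D * F)" .
  have pred: "calH_coeff (\<alpha> - 1) (2*j+1) = - calH_const_even \<alpha> * P * 2^j / F"
    unfolding shifted P_def F_def ..
  have "c + real j = c - 1 + D/2" by (simp add: D_def field_simps)
  then show ?thesis
    unfolding lhs pred diff using pos by (simp add: field_simps) (simp add: D_def algebra_simps)
qed

lemma calH_coeff_rec_odd:
  "calH_coeff \<alpha> (2*m+1) = calH_coeff (\<alpha> - 1) (2*m) - diffs (calH_coeff (\<alpha> - 1)) (2*m+1)"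
proof -
  define c where "c = (1 - \<alpha>)/2"
  define P where "P = pochhammer c m"
  define F where "F = (fact (2*m) :: real)"
  define D where "D = 2 * real m + 1"
  define N where "N = real (2 * Suc m)"
  have pos: "F > 0" "D > 0" "N > 0" by (simp_all add: F_def D_def N_def)
  have "-(\<alpha> - 1)/2 = c" by (simp add: c_def field_simps)
  then have shifted: "calH_coeff (\<alpha> - 1) (2*i) = calH_const_even (\<alpha> - 1) * pochhammer c i * 2^i / fact (2*i)" for i
    unfolding calH_coeff_even by simp
  have lhs: "calH_coeff \<alpha> (2*m+1) = \<alpha> * calH_const_even (\<alpha> - 1) * P * 2^m / (D * F)"
    unfolding calH_coeff_odd calH_const_odd_eq P_def F_def D_def c_def by simp
  have succ: "calH_coeff (\<alpha> - 1) (2 * Suc m) = calH_const_even (\<alpha> - 1) * (P * (c + m)) * (2 * 2^m) / (N * (D * F))"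
    unfolding shifted by (simp add: P_def F_def D_def N_def pochhammer_rec' algebra_simps)
  have "diffs (calH_coeff (\<alpha> - 1)) (2*m+1) = N * calH_coeff (\<alpha> - 1) (2 * Suc m)"
    by (simp add: diffs_def N_def)
  also have "\<dots> = calH_const_even (\<alpha> - 1) * (P * (c + m)) * (2 * 2^m) / (D * F)"
    unfolding succ using pos by simp
  finally have diff: "diffs (calH_coeff (\<alpha> - 1)) (2*m+1) = calH_const_even (\<alpha> - 1) * (P * (c + m)) * (2 * 2^m) / (D * F)" .
  have pred: "calH_coeff (\<alpha> - 1) (2*m) = calH_const_even (\<alpha> - 1) * P * 2^m / F"
    unfolding shifted P_def F_def ..
  show ?thesis
    unfolding lhs pred diff using pos by (simp add: field_simps) (simp add: c_def D_def field_simps)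
qed

text \<open>In terms of \<open>H\<^sub>\<alpha>(z) = \<H>\<^sub>\<alpha>(z, 1)\<close> this is the recurrence
  \<open>H\<^sub>\<alpha> = z H\<^sub>\<alpha>\<^sub>-\<^sub>1 - H\<^sub>\<alpha>\<^sub>-\<^sub>1'\<close>.\<close>
lemma calH_coeff_rec:
  "calH_coeff \<alpha> k = (if k = 0 then 0 else calH_coeff (\<alpha> - 1) (k - 1)) - diffs (calH_coeff (\<alpha> - 1)) k"
proof -
  obtain m where "k = 2*m \<or> k = 2*m+1" by (metis oddE evenE)
  moreover have "m = 0 \<or> (\<exists>j. m = Suc j)" by (cases m) auto
  ultimately consider "k = 0" | j where "k = 2*j+2" | "k = 2*m+1" by auto
  then show ?thesis
  proof cases
    case 1
    then show ?thesis
      using calH_coeff_odd[of "\<alpha> - 1" 0] calH_coeff_even[of \<alpha> 0]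
      by (simp add: diffs_def calH_const_odd_pred)
  next
    case (2 j)
    then show ?thesis using calH_coeff_rec_even[of \<alpha> j] by simp
  next
    case 3
    then show ?thesis using calH_coeff_rec_odd[of \<alpha> m] by simp
  qed
qed

lemma calH_series_coeff_rec:
  assumes t: "t > 0"
  shows "calH_coeff \<alpha> k * t powr ((\<alpha> - real k)/2)
    = (if k = 0 then 0 else calH_coeff (\<alpha> - 1) (k - 1) * t powr ((\<alpha> - 1 - real (k - 1))/2))
      - t * diffs (\<lambda>k. calH_coeff (\<alpha> - 1) k * t powr ((\<alpha> - 1 - real k)/2)) k"
proof -
  have arg: "(\<alpha> - 1 - real (Suc k))/2 = (\<alpha> - real k)/2 - 1"
    by (simp add: field_simps)
  have "t * t powr ((\<alpha> - 1 - real (Suc k))/2) = t powr ((\<alpha> - real k)/2)"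
    using t unfolding arg powr_diff by simp
  moreover have "t * diffs (\<lambda>k. calH_coeff (\<alpha> - 1) k * t powr ((\<alpha> - 1 - real k)/2)) k
      = diffs (calH_coeff (\<alpha> - 1)) k * (t * t powr ((\<alpha> - 1 - real (Suc k))/2))"
    unfolding diffs_def by (simp only: mult_ac)
  moreover have "(if k = 0 then 0 else calH_coeff (\<alpha> - 1) (k - 1) * t powr ((\<alpha> - 1 - real (k - 1))/2))
      = (if k = 0 then 0 else calH_coeff (\<alpha> - 1) (k - 1)) * t powr ((\<alpha> - real k)/2)"
    by (cases k) (simp_all add: diff_diff_eq)
  ultimately show ?thesis
    unfolding calH_coeff_rec[of \<alpha> k] by (simp add: left_diff_distrib)
qed

lemma calH_recurrence:
  assumes t: "t > 0"
  shows "calH \<alpha> x t = x * calH (\<alpha> - 1) x t - t * deriv (\<lambda>y. calH (\<alpha> - 1) y t) x"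
proof -
  define a where "a \<beta> k = calH_coeff \<beta> k * t powr ((\<beta> - real k)/2)" for \<beta> k
  have series: "(\<lambda>k. a \<beta> k * y^k) sums calH \<beta> y t" for \<beta> y
    unfolding a_def using calH_sums[OF t] by simp
  have summable: "summable (\<lambda>k. a (\<alpha> - 1) k * y^k)" for y
    using series sums_summable by blast
  have "(\<lambda>y. calH (\<alpha> - 1) y t) = (\<lambda>y. \<Sum>k. a (\<alpha> - 1) k * y^k)"
    by (intro ext) (metis series sums_unique)
  moreover have "((\<lambda>y. \<Sum>k. a (\<alpha> - 1) k * y^k) has_real_derivative (\<Sum>k. diffs (a (\<alpha> - 1)) k * x^k)) (at x)"
    by (rule termdiffs_strong_converges_everywhere) (rule summable)
  ultimately have "deriv (\<lambda>y. calH (\<alpha> - 1) y t) x = (\<Sum>k. diffs (a (\<alpha> - 1)) k * x^k)"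
    by (simp add: DERIV_imp_deriv)
  then have deriv_sums: "(\<lambda>k. diffs (a (\<alpha> - 1)) k * x^k) sums deriv (\<lambda>y. calH (\<alpha> - 1) y t) x"
    using summable_sums[OF termdiff_converges_all[OF summable]] by simp
  have "(\<lambda>k. (if Suc k = 0 then 0 else a (\<alpha> - 1) (Suc k - 1)) * x^Suc k) sums (x * calH (\<alpha> - 1) x t)"
    using sums_mult[OF series, of x "\<alpha> - 1" x] by (simp add: mult_ac)
  then have shift: "(\<lambda>k. (if k = 0 then 0 else a (\<alpha> - 1) (k - 1)) * x^k) sums (x * calH (\<alpha> - 1) x t)"
    by (subst (asm) sums_Suc_iff) simp
  have "a \<alpha> k = (if k = 0 then 0 else a (\<alpha> - 1) (k - 1)) - t * diffs (a (\<alpha> - 1)) k" for k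
    unfolding a_def by (rule calH_series_coeff_rec[OF t])
  then have "(\<lambda>k. a \<alpha> k * x^k)
      = (\<lambda>k. (if k = 0 then 0 else a (\<alpha> - 1) (k - 1)) * x^k - t * (diffs (a (\<alpha> - 1)) k * x^k))"
    by (simp add: left_diff_distrib mult.assoc)
  then have "(\<lambda>k. a \<alpha> k * x^k) sums (x * calH (\<alpha> - 1) x t - t * deriv (\<lambda>y. calH (\<alpha> - 1) y t) x)"
    using sums_diff[OF shift sums_mult[OF deriv_sums, of t]] by simp
  then show ?thesis
    using series sums_unique2 by blast
qed

section \<open>Gaussian moments and the case \<open>\<alpha> < 0\<close>\<close>

lemma Gamma_has_integral_greaterThan:
  assumes "s > (0::real)"
  shows "((\<lambda>v. v powr (s - 1) * exp (-v)) has_integral Gamma s) {0<..}"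
proof -
  have "((\<lambda>v. v powr (s - 1) / exp v) has_integral Gamma s) {0..}"
    by (rule Gamma_integral_real[OF assms])
  then have "((\<lambda>v. if v \<in> {0<..} then v powr (s - 1) / exp v else 0) has_integral Gamma s) {0..}"
    by (rule has_integral_spike[of "{0}", rotated 2]) auto
  then show ?thesis
    by (subst (asm) has_integral_restrict) (auto simp: exp_minus field_simps)
qed

lemma has_integral_substitution_square:
  fixes f :: "real \<Rightarrow> real"
  assumes c: "c > 0" and f: "f absolutely_integrable_on {0<..}"
  shows "((\<lambda>u. 2*c*u * f (c * u^2)) has_integral integral {0<..} f) {0<..}"
proof -
  define g where "g u = c * u^2" for u :: real
  have "g ` {0<..} = {0<..}"
  proof safe
    fix v :: real assume "v > 0"
    then have "sqrt (v/c) > 0" "g (sqrt (v/c)) = v" using c by (auto simp: g_def)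
    then show "v \<in> g ` {0<..}" by (metis greaterThan_iff image_eqI)
  qed (use c in \<open>auto simp: g_def\<close>)
  moreover have "(g has_field_derivative (2*c*u)) (at u within {0<..})" for u
    unfolding g_def by (auto intro!: derivative_eq_intros)
  moreover have "inj_on g {0<..}"
    using c by (auto simp: inj_on_def g_def)
  ultimately have "(\<lambda>u. \<bar>2*c*u\<bar> * f (g u)) integrable_on {0<..}
      \<and> integral {0<..} (\<lambda>u. \<bar>2*c*u\<bar> * f (g u)) = integral {0<..} f"
    using has_absolute_integral_change_of_variables_1'[of "{0<..}" g "\<lambda>u. 2*c*u" f "integral {0<..} f"] f
    by (auto dest: set_lebesgue_integral_eq_integral(1))
  then have "((\<lambda>u. \<bar>2*c*u\<bar> * f (g u)) has_integral integral {0<..} f) {0<..}"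
    by (metis integrable_integral)
  then show ?thesis
    by (rule has_integral_eq[rotated]) (use c in \<open>simp add: g_def\<close>)
qed

lemma gaussian_moment_has_integral:
  assumes s: "s > (0::real)" and c: "c > 0"
  shows "((\<lambda>u. u powr (s - 1) * exp (-(c * u^2))) has_integral Gamma (s/2) / (2 * c powr (s/2))) {0<..}"
proof -
  define f where "f v = v powr (s/2 - 1) * exp (-v)" for v :: real
  have "(f has_integral Gamma (s/2)) {0<..}"
    unfolding f_def using Gamma_has_integral_greaterThan[of "s/2"] s by simp
  moreover have "f absolutely_integrable_on {0<..}"
    using calculation unfolding f_def by (intro nonnegative_absolutely_integrable_1) auto
  ultimately have "((\<lambda>u. 2*c*u * f (c * u^2)) has_integral Gamma (s/2)) {0<..}"
    using has_integral_substitution_square[OF c] by (metis integral_unique)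
  then have "((\<lambda>u. inverse (2 * c powr (s/2)) * (2*c*u * f (c * u^2)))
      has_integral inverse (2 * c powr (s/2)) * Gamma (s/2)) {0<..}"
    by (rule has_integral_mult_right)
  moreover have "inverse (2 * c powr (s/2)) * (2*c*u * f (c * u^2)) = u powr (s - 1) * exp (-(c * u^2))"
    if "u \<in> {0<..}" for u
  proof -
    have u: "u > 0" using that by simp
    have "(c * u^2) powr (s/2 - 1) = c powr (s/2 - 1) * (u powr 2) powr (s/2 - 1)"
      using c u by (simp add: powr_mult powr_realpow)
    also have "(u powr 2) powr (s/2 - 1) = u powr (s - 2)"
      by (simp add: powr_powr algebra_simps)
    finally have "2*c*u * f (c * u^2) = 2 * (c * c powr (s/2 - 1)) * (u * u powr (s - 2)) * exp (-(c * u^2))"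
      by (simp add: f_def)
    also have "c * c powr (s/2 - 1) = c powr (s/2)"
      using c by (simp add: powr_diff)
    also have "u * u powr (s - 2) = u powr (s - 1)"
      using u by (simp add: powr_diff powr_add field_simps power2_eq_square)
    finally show ?thesis
      using c by simp
  qed
  ultimately show ?thesis
    unfolding divide_inverse_commute by (rule has_integral_eq[rotated])
qed

lemma absolutely_integrable_powr_exp_quadratic:
  assumes s: "s > 0" and a: "a > 0"
  shows "(\<lambda>u::real. u powr (s - 1) * exp (b*u - a*u^2)) absolutely_integrable_on {0<..}"
proof (rule measurable_bounded_by_integrable_imp_absolutely_integrable)
  show "(\<lambda>u. u powr (s - 1) * exp (b*u - a*u^2)) \<in> borel_measurable (lebesgue_on {0<..})"
    by (intro continuous_imp_measurable_on_sets_lebesgue continuous_intros) auto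
  have "(\<lambda>u. u powr (s - 1) * exp (-((a/2) * u^2))) integrable_on {0<..}"
    using gaussian_moment_has_integral[OF s, of "a/2"] a by (auto intro: has_integral_integrable)
  then show "(\<lambda>u. exp (b^2/(2*a)) * (u powr (s - 1) * exp (-((a/2) * u^2)))) integrable_on {0<..}"
    by (rule integrable_on_mult_right)
  fix u :: real assume "u \<in> {0<..}"
  have "0 \<le> (a/2) * (u - b/a)^2" using a by simp
  also have "(a/2) * (u - b/a)^2 = b^2/(2*a) - (a/2) * u^2 - (b*u - a*u^2)"
    using a by (simp add: power2_eq_square field_simps)
  finally have "exp (b*u - a*u^2) \<le> exp (b^2/(2*a)) * exp (-((a/2) * u^2))"
    by (simp flip: exp_add)
  then show "norm (u powr (s - 1) * exp (b*u - a*u^2))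
      \<le> exp (b^2/(2*a)) * (u powr (s - 1) * exp (-((a/2) * u^2)))"
    by (simp add: abs_mult mult_left_mono mult.left_commute)
qed simp

lemma exp_series_integral_sums:
  fixes w :: "real \<Rightarrow> real" and S :: "real set"
  assumes moments: "\<And>k. ((\<lambda>u. u^k * w u) has_integral m k) S"
    and dom: "(\<lambda>u. exp (\<bar>x\<bar> * \<bar>u\<bar>) * \<bar>w u\<bar>) integrable_on S"
  shows "(\<lambda>u. exp (- x * u) * w u) integrable_on S"
    and "(\<lambda>k. (- x)^k / fact k * m k) sums integral S (\<lambda>u. exp (- x * u) * w u)"
proof -
  define f where "f N u = (\<Sum>k<N. (- x)^k / fact k * (u^k * w u))" for N u
  have f_integral: "(f N has_integral (\<Sum>k<N. (- x)^k / fact k * m k)) S" for N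
    unfolding f_def by (intro has_integral_sum has_integral_mult_right moments) auto
  have f_eq: "f N u = (\<Sum>k<N. (- x * u)^k / fact k) * w u" for N u
    unfolding f_def sum_distrib_right power_mult_distrib by (simp add: mult_ac)
  have bound: "norm (f N u) \<le> exp (\<bar>x\<bar> * \<bar>u\<bar>) * \<bar>w u\<bar>" for N u
  proof -
    have "(\<lambda>k. \<bar>x*u\<bar>^k / fact k) sums exp \<bar>x*u\<bar>"
      using exp_converges[of "\<bar>x*u\<bar>"] by (simp add: divide_inverse mult.commute)
    then have "(\<Sum>k<N. \<bar>x*u\<bar>^k / fact k) \<le> exp \<bar>x*u\<bar>"
      using sum_le_suminf[of "\<lambda>k. \<bar>x*u\<bar>^k / fact k" "{..<N}"] by (simp add: sums_iff)
    moreover have "\<bar>\<Sum>k<N. (- x * u)^k / fact k\<bar> \<le> (\<Sum>k<N. \<bar>x*u\<bar>^k / fact k)"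
      by (rule order_trans[OF sum_abs]) (simp add: abs_mult power_abs)
    ultimately show ?thesis
      unfolding f_eq by (simp add: abs_mult mult_right_mono)
  qed
  have conv: "(\<lambda>N. f N u) \<longlonglongrightarrow> exp (- x * u) * w u" for u
  proof -
    have "(\<lambda>N. \<Sum>k<N. (- x * u)^k / fact k) \<longlonglongrightarrow> exp (- x * u)"
      using exp_converges[of "- x * u"] by (simp add: sums_def divide_inverse mult.commute)
    then show ?thesis
      unfolding f_eq by (rule tendsto_mult_right)
  qed
  have "f N integrable_on S" for N
    using f_integral by blast
  note limit = dominated_convergence[OF this dom bound conv]
  show "(\<lambda>u. exp (- x * u) * w u) integrable_on S"
    by (rule limit(1))
  show "(\<lambda>k. (- x)^k / fact k * m k) sums integral S (\<lambda>u. exp (- x * u) * w u)"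
    using limit(2) unfolding sums_def by (simp only: integral_unique[OF f_integral])
qed

lemma Gamma_legendre_duplication_real:
  assumes s: "s > (0::real)"
  shows "Gamma (s/2) * Gamma ((s + 1)/2) = 2 powr (1 - s) * sqrt pi * Gamma s"
proof -
  define z where "z = complex_of_real (s/2)"
  have z: "z + 1/2 = complex_of_real ((s + 1)/2)" "2*z = complex_of_real s"
    "(1 - 2*z) * of_real (ln 2) = complex_of_real ((1 - s) * ln 2)"
    by (simp_all add: z_def field_simps)
  have "z \<notin> \<int>\<^sub>\<le>\<^sub>0" "z + 1/2 \<notin> \<int>\<^sub>\<le>\<^sub>0"
    unfolding z(1) unfolding z_def of_real_in_nonpos_Ints_iff using s by auto
  from Gamma_legendre_duplication[OF this]
  have "complex_of_real (Gamma (s/2) * Gamma ((s + 1)/2)) = complex_of_real (exp ((1 - s) * ln 2) * sqrt pi * Gamma s)"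
    unfolding z unfolding z_def Gamma_complex_of_real by (simp flip: exp_of_real)
  then have "Gamma (s/2) * Gamma ((s + 1)/2) = exp ((1 - s) * ln 2) * sqrt pi * Gamma s"
    by (simp only: of_real_eq_iff)
  then show ?thesis
    by (simp add: powr_def)
qed

text \<open>Legendre's duplication formula merges the even and the odd case.\<close>
lemma calH_coeff_neg:
  assumes s: "s > 0"
  shows "calH_coeff (-s) k = (-1)^k * 2 powr ((s + real k)/2) * Gamma ((s + real k)/2) / (2 * Gamma s * fact k)"
proof -
  define G1 where "G1 = Gamma (s/2)"
  define G2 where "G2 = Gamma ((s + 1)/2)"
  define P where "P = (2::real) powr (s/2)"
  have pos: "G1 > 0" "G2 > 0" "P > 0" "sqrt pi > 0"
    using s by (simp_all add: G1_def G2_def P_def Gamma_real_pos)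
  have "(2::real) powr (1 - s) * (P * P) = 2"
    unfolding P_def by (simp flip: powr_add)
  then have Gamma_s: "Gamma s = G1 * G2 * (P * P) / (2 * sqrt pi)"
    using Gamma_legendre_duplication_real[OF s] pos unfolding G1_def[symmetric] G2_def[symmetric]
    by (simp add: field_simps)
  obtain m where "k = 2*m \<or> k = 2*m+1" by (metis oddE evenE)
  then consider "k = 2*m" | "k = 2*m+1" by blast
  then show ?thesis
  proof cases
    case 1
    have arg: "(s + real (2*m))/2 = s/2 + real m" by simp
    have two: "(2::real) powr (s/2 + real m) = P * 2^m"
      by (simp add: P_def powr_add powr_realpow)
    have const: "calH_const_even (-s) = sqrt pi / (P * G2)"
      unfolding calH_const_even_def P_def G2_def
      by (simp add: powr_minus_divide rGamma_inverse_Gamma field_simps add.commute)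
    have poch: "pochhammer (-(-s)/2) m = Gamma (s/2 + real m) / G1"
      unfolding G1_def using s by (simp, subst pochhammer_Gamma) (auto dest: nonpos_Ints_nonpos)
    show ?thesis
      unfolding 1 calH_coeff_even arg two const poch Gamma_s using pos by (simp add: field_simps)
  next
    case 2
    have arg: "(s + real (2*m+1))/2 = (s + 1)/2 + real m" by simp
    have two: "(2::real) powr ((s + 1)/2 + real m) = P * sqrt 2 * 2^m"
      by (simp add: P_def powr_add powr_realpow add_divide_distrib powr_half_sqrt)
    have arg': "(-s + 1)/2 = 1/2 - s/2" by simp
    have "(2::real) powr ((-s + 1)/2) = sqrt 2 / P"
      unfolding arg' P_def powr_diff by (simp add: powr_half_sqrt)
    then have const: "calH_const_odd (-s) = - sqrt pi * sqrt 2 / (P * G1)"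
      unfolding calH_const_odd_def G1_def by (simp add: rGamma_inverse_Gamma field_simps)
    have poch: "pochhammer ((1 - -s)/2) m = Gamma ((s + 1)/2 + real m) / G2"
      unfolding G2_def using s by (simp, subst pochhammer_Gamma) (auto dest: nonpos_Ints_nonpos simp: add.commute)
    have F: "(fact (2*m+1) :: real) > 0" by simp
    show ?thesis
      unfolding 2 calH_coeff_odd arg two const poch Gamma_s using pos F
      by (simp add: field_simps del: fact_Suc)
  qed
qed

lemma calH_neg_sums:
  assumes s: "s > 0" and t: "t > 0"
  shows "(\<lambda>k. (- x)^k / fact k * (Gamma ((s + real k)/2) / (2 * (t/2) powr ((s + real k)/2))))
    sums (Gamma s * calH (-s) x t)"
proof -
  have "(- x)^k / fact k * (Gamma ((s + real k)/2) / (2 * (t/2) powr ((s + real k)/2)))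
      = Gamma s * (calH_coeff (-s) k * t powr ((-s - real k)/2) * x^k)" for k
  proof -
    have "t powr ((-s - real k)/2) = inverse (t powr ((s + real k)/2))"
      by (simp add: powr_minus [symmetric] minus_divide_left)
    moreover have "Gamma s \<noteq> 0"
      using s Gamma_real_pos by (metis less_irrefl)
    ultimately show ?thesis
      using s t unfolding calH_coeff_neg[OF s]
      by (simp add: power_minus [of x] powr_divide field_simps)
  qed
  then show ?thesis
    using sums_mult[OF calH_sums[OF t], of "Gamma s" "-s" x] by simp
qed

definition appell_kernel :: "real \<Rightarrow> real \<Rightarrow> real \<Rightarrow> real" where
  "appell_kernel t x u = exp (- u * x - u^2 / 2 * t)"

lemma calH_neg_has_integral:
  assumes s: "s > 0" and t: "t > 0"
  shows "((\<lambda>u. u powr (s - 1) * appell_kernel t x u) has_integral Gamma s * calH (-s) x t) {0<..}"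
proof -
  define w where "w u = u powr (s - 1) * exp (- (t/2 * u^2))" for u
  define m where "m k = Gamma ((s + real k)/2) / (2 * (t/2) powr ((s + real k)/2))" for k :: nat
  have moments: "((\<lambda>u. u^k * w u) has_integral m k) {0<..}" for k
  proof -
    have "u powr (s + real k - 1) * exp (- (t/2 * u^2)) = u^k * w u" if "u \<in> {0<..}" for u
      using that powr_add[of u "s - 1" "real k"] by (simp add: w_def powr_realpow algebra_simps)
    moreover have "((\<lambda>u. u powr (s + real k - 1) * exp (- (t/2 * u^2)))
        has_integral Gamma ((s + real k)/2) / (2 * (t/2) powr ((s + real k)/2))) {0<..}"
      using gaussian_moment_has_integral[of "s + real k" "t/2"] s t by simp
    ultimately show ?thesis
      unfolding m_def by (rule has_integral_eq)
  qed
  have dom: "(\<lambda>u. exp (\<bar>x\<bar> * \<bar>u\<bar>) * \<bar>w u\<bar>) integrable_on {0<..}"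
  proof -
    have "u powr (s - 1) * exp (\<bar>x\<bar> * u - t/2 * u^2) = exp (\<bar>x\<bar> * \<bar>u\<bar>) * \<bar>w u\<bar>" if "u \<in> {0<..}" for u
      using that by (simp add: w_def abs_mult mult.left_commute flip: exp_add)
    moreover have "(\<lambda>u. u powr (s - 1) * exp (\<bar>x\<bar> * u - t/2 * u^2)) integrable_on {0<..}"
      using absolutely_integrable_powr_exp_quadratic[OF s, of "t/2" "\<bar>x\<bar>"] t
      by (simp add: absolutely_integrable_on_def)
    ultimately show ?thesis
      by (rule integrable_eq[rotated])
  qed
  have "(\<lambda>k. (- x)^k / fact k * m k) sums (Gamma s * calH (-s) x t)"
    unfolding m_def by (rule calH_neg_sums[OF s t])
  then have "integral {0<..} (\<lambda>u. exp (- x * u) * w u) = Gamma s * calH (-s) x t"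
    using exp_series_integral_sums(2)[OF moments dom] sums_unique2 by blast
  moreover have "(\<lambda>u. exp (- x * u) * w u) = (\<lambda>u. u powr (s - 1) * appell_kernel t x u)"
    by (simp add: fun_eq_iff w_def appell_kernel_def algebra_simps flip: exp_add)
  ultimately show ?thesis
    using integrable_integral[OF exp_series_integral_sums(1)[OF moments dom]] by simp
qed

section \<open>Natural \<open>\<alpha>\<close>\<close>

fun kernel_deriv_poly :: "real \<Rightarrow> nat \<Rightarrow> real poly" where
  "kernel_deriv_poly t 0 = 1"
| "kernel_deriv_poly t (Suc n) = smult t (pderiv (kernel_deriv_poly t n)) - [:0, 1:] * kernel_deriv_poly t n"

lemma poly_mult_appell_kernel_has_real_derivative:
  "((\<lambda>u. poly p (x + t*u) * appell_kernel t x u) has_real_derivative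
     poly (smult t (pderiv p) - [:0, 1:] * p) (x + t*u) * appell_kernel t x u) (at u)"
proof -
  have "((\<lambda>u. poly p (x + t*u)) has_real_derivative poly (pderiv p) (x + t*u) * t) (at u)"
    by (rule DERIV_chain2[OF poly_DERIV]) (auto intro!: derivative_eq_intros)
  moreover have "(appell_kernel t x has_real_derivative appell_kernel t x u * (- x - t*u)) (at u)"
    unfolding appell_kernel_def [abs_def]
    by (auto intro!: derivative_eq_intros simp: power2_eq_square algebra_simps)
  ultimately show ?thesis
    by (rule DERIV_mult[THEN DERIV_cong]) (simp add: algebra_simps)
qed

lemma higher_deriv_appell_kernel:
  "(deriv ^^ n) (appell_kernel t x) = (\<lambda>u. poly (kernel_deriv_poly t n) (x + t*u) * appell_kernel t x u)"
proof (induction n)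
  case 0
  show ?case by (simp add: appell_kernel_def)
next
  case (Suc n)
  show ?case
    unfolding funpow.simps(2) o_def Suc.IH kernel_deriv_poly.simps
    by (intro ext DERIV_imp_deriv poly_mult_appell_kernel_has_real_derivative)
qed

lemma calH_coeff_zero: "calH_coeff 0 k = (if k = 0 then 1 else 0)"
proof -
  have "calH_const_even 0 = 1" "calH_const_odd 0 = 0"
    by (simp_all add: calH_const_even_def calH_const_odd_def rGamma_inverse_Gamma Gamma_one_half_real)
  then show ?thesis
    by (auto simp: calH_coeff_def pochhammer_0_left elim!: evenE)
qed

lemma calH_zero:
  assumes "t > 0"
  shows "calH 0 x t = 1"
proof -
  have "(\<lambda>k. calH_coeff 0 k * t powr ((0 - real k)/2) * x^k) = (\<lambda>k. if k = 0 then 1 else 0)"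
    using assms by (auto simp: calH_coeff_zero)
  then show ?thesis
    using calH_sums[OF assms, of 0 x] sums_single[of 0 "\<lambda>_. 1::real"] sums_unique2 by fastforce
qed

lemma calH_nat:
  assumes t: "t > 0"
  shows "calH (real n) x t = (-1)^n * poly (kernel_deriv_poly t n) x"
proof (induction n arbitrary: x)
  case 0
  show ?case using calH_zero[OF t] by simp
next
  case (Suc n)
  have "deriv (\<lambda>y. calH (real n) y t) x = (-1)^n * poly (pderiv (kernel_deriv_poly t n)) x"
    unfolding Suc.IH by (intro DERIV_imp_deriv) (auto intro!: derivative_eq_intros)
  then show ?case
    using calH_recurrence[OF t, of "real (Suc n)" x] Suc.IH by (simp add: algebra_simps)
qed

lemma inv_laplace_pow_pair_nat:
  assumes "t > 0"
  shows "inv_laplace_pow_pair (real n) (appell_kernel t x) = calH (real n) x t"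
  by (simp add: inv_laplace_pow_pair_def higher_deriv_appell_kernel calH_nat[OF assms] appell_kernel_def)

section \<open>Non-integer positive \<open>\<alpha>\<close>\<close>

lemma poly_abs_le_exp:
  fixes p :: "real poly"
  shows "\<exists>K c. K \<ge> 0 \<and> c \<ge> 0 \<and> (\<forall>z. \<bar>poly p z\<bar> \<le> K * exp (c * \<bar>z\<bar>))"
proof (induction p)
  case 0
  show ?case by (intro exI[of _ 0]) auto
next
  case (pCons a p)
  then obtain K c where K: "K \<ge> 0" "c \<ge> 0" "\<And>z. \<bar>poly p z\<bar> \<le> K * exp (c * \<bar>z\<bar>)"
    by blast
  have "\<bar>poly (pCons a p) z\<bar> \<le> (\<bar>a\<bar> + K) * exp ((c + 1) * \<bar>z\<bar>)" for z
  proof -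
    have "\<bar>z\<bar> \<le> exp \<bar>z\<bar>"
      using exp_ge_add_one_self[of "\<bar>z\<bar>"] by linarith
    then have "\<bar>z\<bar> * \<bar>poly p z\<bar> \<le> exp \<bar>z\<bar> * (K * exp (c * \<bar>z\<bar>))"
      using K by (intro mult_mono) auto
    also have "\<dots> = K * exp ((c + 1) * \<bar>z\<bar>)"
      by (simp add: algebra_simps flip: exp_add)
    finally have "\<bar>z\<bar> * \<bar>poly p z\<bar> \<le> K * exp ((c + 1) * \<bar>z\<bar>)" .
    moreover have "\<bar>a\<bar> \<le> \<bar>a\<bar> * exp ((c + 1) * \<bar>z\<bar>)"
      using K by (simp add: mult_le_cancel_left1)
    moreover have "\<bar>poly (pCons a p) z\<bar> \<le> \<bar>a\<bar> + \<bar>z\<bar> * \<bar>poly p z\<bar>"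
      by (simp add: abs_mult [symmetric] abs_triangle_ineq)
    ultimately show ?thesis
      by (simp add: algebra_simps)
  qed
  then show ?case
    using K by (intro exI[of _ "\<bar>a\<bar> + K"] exI[of _ "c + 1"]) auto
qed

lemma integral_has_real_derivative_dominated:
  fixes f f' :: "real \<Rightarrow> real \<Rightarrow> real" and S :: "real set"
  assumes int: "\<And>y. f y integrable_on S"
    and der: "\<And>u y. u \<in> S \<Longrightarrow> ((\<lambda>y. f y u) has_real_derivative f' y u) (at y)"
    and bound: "\<And>u y. u \<in> S \<Longrightarrow> \<bar>y - x\<bar> \<le> 1 \<Longrightarrow> \<bar>f' y u\<bar> \<le> B u"
    and B: "B integrable_on S"
  shows "((\<lambda>y. integral S (f y)) has_real_derivative integral S (f' x)) (at x)"
  unfolding DERIV_def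
proof (subst tendsto_at_iff_sequentially, intro allI impI)
  fix X :: "nat \<Rightarrow> real"
  assume X0: "\<forall>i. X i \<in> UNIV - {0}" and X: "X \<longlonglongrightarrow> 0"
  obtain N where N: "\<And>i. i \<ge> N \<Longrightarrow> \<bar>X i\<bar> < 1"
    using LIMSEQ_D[OF X, of 1] by auto
  define Y where "Y i = X (i + N)" for i
  have Y0: "Y i \<noteq> 0" and Y1: "\<bar>Y i\<bar> \<le> 1" for i
    using X0 N[of "i + N"] by (auto simp: Y_def)
  have Y: "filterlim Y (at 0) sequentially"
    unfolding filterlim_at Y_def using LIMSEQ_ignore_initial_segment[OF X] Y0 by (auto simp: Y_def)
  define q where "q h u = (f (x + h) u - f x u) / h" for h u
  have "q (Y i) integrable_on S" for i
    unfolding q_def divide_inverse by (intro integrable_on_mult_left integrable_diff int)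
  moreover have "norm (q (Y i) u) \<le> B u" if u: "u \<in> S" for i u
  proof -
    have "norm (f (x + Y i) u - f x u) \<le> B u * norm (x + Y i - x)"
      using Y1[of i] bound[OF u] der[OF u]
      by (intro field_differentiable_bound[of "cball x 1" _ "\<lambda>y. f' y u"])
         (auto simp: dist_real_def has_field_derivative_at_within)
    then show ?thesis
      unfolding q_def using Y0[of i] by (simp add: divide_le_eq mult.commute)
  qed
  moreover have "(\<lambda>i. q (Y i) u) \<longlonglongrightarrow> f' x u" if u: "u \<in> S" for u
    using filterlim_compose[OF der[OF u, of x, unfolded DERIV_def] Y] by (simp add: q_def o_def)
  ultimately have "(\<lambda>i. integral S (q (Y i))) \<longlonglongrightarrow> integral S (f' x)"
    by (intro dominated_convergence(2)[OF _ B]) auto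
  moreover have "integral S (q h) = (integral S (f (x + h)) - integral S (f x)) / h" for h
    unfolding q_def divide_inverse by (simp add: integral_diff int)
  ultimately have "(\<lambda>i. ((\<lambda>h. (integral S (f (x + h)) - integral S (f x)) / h) \<circ> X) (i + N))
      \<longlonglongrightarrow> integral S (f' x)"
    by (simp add: Y_def o_def)
  then show "((\<lambda>h. (integral S (f (x + h)) - integral S (f x)) / h) \<circ> X) \<longlonglongrightarrow> integral S (f' x)"
    by (rule LIMSEQ_offset)
qed

text \<open>For \<open>p = kernel_deriv_poly t n\<close> and \<open>\<beta> = n - \<alpha>\<close> this is the integrand
  \<open>u\<^sup>n\<^sup>-\<^sup>\<alpha>\<^sup>-\<^sup>1 \<phi>\<^sup>(\<^sup>n\<^sup>)(u)\<close> of the Caputo pairing in \<open>inv_laplace_pow_pair\<close>.\<close>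
definition caputo_integrand :: "real \<Rightarrow> real \<Rightarrow> real poly \<Rightarrow> real \<Rightarrow> real \<Rightarrow> real" where
  "caputo_integrand \<beta> t p x u = u powr (\<beta> - 1) * poly p (x + t*u) * appell_kernel t x u"

lemma caputo_integrand_one:
  "caputo_integrand \<beta> t 1 x = (\<lambda>u. u powr (\<beta> - 1) * appell_kernel t x u)"
  by (simp add: caputo_integrand_def fun_eq_iff)

lemma caputo_integrand_bound:
  assumes t: "t > 0"
  obtains K b where "K \<ge> 0"
    "\<And>y u. \<bar>y - x\<bar> \<le> 1 \<Longrightarrow> u > 0 \<Longrightarrow>
       \<bar>caputo_integrand \<beta> t p y u\<bar> \<le> K * (u powr (\<beta> - 1) * exp (b*u - t/2 * u^2))"
proof -
  obtain K c where K: "K \<ge> 0" "c \<ge> 0" "\<And>z. \<bar>poly p z\<bar> \<le> K * exp (c * \<bar>z\<bar>)"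
    using poly_abs_le_exp[of p] by blast
  define K' where "K' = K * exp (c * (\<bar>x\<bar> + 1))"
  define b where "b = c * t + \<bar>x\<bar> + 1"
  have "\<bar>caputo_integrand \<beta> t p y u\<bar> \<le> K' * (u powr (\<beta> - 1) * exp (b*u - t/2 * u^2))"
    if y: "\<bar>y - x\<bar> \<le> 1" and u: "u > 0" for y u
  proof -
    have "\<bar>y\<bar> \<le> \<bar>x\<bar> + 1" using y by linarith
    then have "c * \<bar>y + t*u\<bar> \<le> c * (\<bar>x\<bar> + 1) + c * t * u"
      using K(2) t u abs_triangle_ineq[of y "t*u"] mult_left_mono[of "\<bar>y + t*u\<bar>" "\<bar>x\<bar> + 1 + t*u" c]
      by (simp add: algebra_simps)
    then have "K * exp (c * \<bar>y + t*u\<bar>) \<le> K * exp (c * (\<bar>x\<bar> + 1) + c * t * u)"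
      using K(1) by (intro mult_left_mono) auto
    then have "\<bar>poly p (y + t*u)\<bar> \<le> K' * exp (c * t * u)"
      using K(3)[of "y + t*u"] unfolding K'_def by (simp add: exp_add mult.assoc)
    moreover have "appell_kernel t y u \<le> exp ((\<bar>x\<bar> + 1) * u - t/2 * u^2)"
      using \<open>\<bar>y\<bar> \<le> \<bar>x\<bar> + 1\<close> u mult_right_mono[of "-y" "\<bar>x\<bar> + 1" u]
      unfolding appell_kernel_def by (simp add: algebra_simps)
    ultimately have "\<bar>poly p (y + t*u)\<bar> * appell_kernel t y u
        \<le> K' * exp (c * t * u) * exp ((\<bar>x\<bar> + 1) * u - t/2 * u^2)"
      by (intro mult_mono) (auto simp: appell_kernel_def)
    also have "\<dots> = K' * exp (b*u - t/2 * u^2)"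
      unfolding b_def by (simp add: mult.assoc algebra_simps flip: exp_add)
    finally show ?thesis
      unfolding caputo_integrand_def using u
      by (simp add: abs_mult mult.assoc mult.left_commute[of _ "u powr (\<beta> - 1)"] appell_kernel_def mult_left_mono)
  qed
  moreover have "K' \<ge> 0" using K by (simp add: K'_def)
  ultimately show ?thesis using that by blast
qed

lemma absolutely_integrable_caputo_integrand:
  assumes b: "\<beta> > 0" and t: "t > 0"
  shows "caputo_integrand \<beta> t p y absolutely_integrable_on {0<..}"
proof -
  obtain K c where K: "\<And>u. u > 0 \<Longrightarrow>
      \<bar>caputo_integrand \<beta> t p y u\<bar> \<le> K * (u powr (\<beta> - 1) * exp (c*u - t/2 * u^2))"
    using caputo_integrand_bound[OF t, of y \<beta> p] by (metis abs_zero diff_self order_refl zero_le_one)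
  show ?thesis
  proof (rule measurable_bounded_by_integrable_imp_absolutely_integrable)
    show "caputo_integrand \<beta> t p y \<in> borel_measurable (lebesgue_on {0<..})"
      unfolding caputo_integrand_def appell_kernel_def
      by (intro continuous_imp_measurable_on_sets_lebesgue continuous_intros) auto
    have "(\<lambda>u. u powr (\<beta> - 1) * exp (c*u - t/2 * u^2)) integrable_on {0<..}"
      using absolutely_integrable_powr_exp_quadratic[OF b, of "t/2" c] t by (simp add: absolutely_integrable_on_def)
    then show "(\<lambda>u. K * (u powr (\<beta> - 1) * exp (c*u - t/2 * u^2))) integrable_on {0<..}"
      by (rule integrable_on_mult_right)
  qed (use K in auto)
qed

lemma caputo_integrand_has_real_derivative:
  assumes u: "u > 0"
  shows "((\<lambda>y. caputo_integrand \<beta> t p y u) has_real_derivative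
            caputo_integrand \<beta> t (pderiv p) y u - caputo_integrand (\<beta> + 1) t p y u) (at y)"
proof -
  have "((\<lambda>y. poly p (y + t*u)) has_real_derivative poly (pderiv p) (y + t*u) * 1) (at y)"
    by (rule DERIV_chain2[OF poly_DERIV]) (auto intro!: derivative_eq_intros)
  moreover have "((\<lambda>y. appell_kernel t y u) has_real_derivative appell_kernel t y u * (- u)) (at y)"
    unfolding appell_kernel_def by (auto intro!: derivative_eq_intros)
  ultimately have d: "((\<lambda>y. u powr (\<beta> - 1) * (poly p (y + t*u) * appell_kernel t y u)) has_real_derivative
      u powr (\<beta> - 1) * (poly (pderiv p) (y + t*u) * 1 * appell_kernel t y u
        + appell_kernel t y u * (- u) * poly p (y + t*u))) (at y)"
    by (intro DERIV_cmult DERIV_mult)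
  have "u powr (\<beta> + 1 - 1) = u powr (\<beta> - 1) * u"
    using u powr_add[of u "\<beta> - 1" 1] by simp
  then show ?thesis
    unfolding caputo_integrand_def mult.assoc by (intro DERIV_cong[OF d]) (simp add: algebra_simps)
qed

lemma integral_caputo_integrand_has_real_derivative:
  assumes b: "\<beta> > 0" and t: "t > 0"
  shows "((\<lambda>y. integral {0<..} (caputo_integrand \<beta> t p y)) has_real_derivative
           integral {0<..} (\<lambda>u. caputo_integrand \<beta> t (pderiv p) x u - caputo_integrand (\<beta> + 1) t p x u)) (at x)"
proof -
  obtain K1 b1 where K1: "\<And>y u. \<bar>y - x\<bar> \<le> 1 \<Longrightarrow> u > 0 \<Longrightarrow>
      \<bar>caputo_integrand \<beta> t (pderiv p) y u\<bar> \<le> K1 * (u powr (\<beta> - 1) * exp (b1*u - t/2 * u^2))"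
    using caputo_integrand_bound[OF t] by metis
  obtain K2 b2 where K2: "\<And>y u. \<bar>y - x\<bar> \<le> 1 \<Longrightarrow> u > 0 \<Longrightarrow>
      \<bar>caputo_integrand (\<beta> + 1) t p y u\<bar> \<le> K2 * (u powr (\<beta> + 1 - 1) * exp (b2*u - t/2 * u^2))"
    using caputo_integrand_bound[OF t] by metis
  have b': "\<beta> + 1 > 0" using b by simp
  have "(\<lambda>u. u powr (\<beta> - 1) * exp (b1*u - t/2 * u^2)) integrable_on {0<..}"
    "(\<lambda>u. u powr (\<beta> + 1 - 1) * exp (b2*u - t/2 * u^2)) integrable_on {0<..}"
    using absolutely_integrable_powr_exp_quadratic[OF b, of "t/2" b1]
      absolutely_integrable_powr_exp_quadratic[OF b', of "t/2" b2] t
    by (simp_all add: absolutely_integrable_on_def)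
  then have "(\<lambda>u. K1 * (u powr (\<beta> - 1) * exp (b1*u - t/2 * u^2))
      + K2 * (u powr (\<beta> + 1 - 1) * exp (b2*u - t/2 * u^2))) integrable_on {0<..}"
    by (intro integrable_add integrable_on_mult_right)
  then show ?thesis
  proof (rule integral_has_real_derivative_dominated[rotated 3])
    show "caputo_integrand \<beta> t p y integrable_on {0<..}" for y
      using absolutely_integrable_caputo_integrand[OF b t] by (simp add: absolutely_integrable_on_def)
    show "((\<lambda>y. caputo_integrand \<beta> t p y u) has_real_derivative
        caputo_integrand \<beta> t (pderiv p) y u - caputo_integrand (\<beta> + 1) t p y u) (at y)"
      if "u \<in> {0<..}" for u y
      using that caputo_integrand_has_real_derivative by simp
    show "\<bar>caputo_integrand \<beta> t (pderiv p) y u - caputo_integrand (\<beta> + 1) t p y u\<bar>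
        \<le> K1 * (u powr (\<beta> - 1) * exp (b1*u - t/2 * u^2)) + K2 * (u powr (\<beta> + 1 - 1) * exp (b2*u - t/2 * u^2))"
      if "u \<in> {0<..}" "\<bar>y - x\<bar> \<le> 1" for u y
      using K1[of y u] K2[of y u] that by (auto intro: abs_triangle_ineq4[THEN order_trans])
  qed
qed

lemma integral_caputo_integrand_rec:
  assumes b: "\<beta> > 0" and t: "t > 0"
  shows "x * integral {0<..} (caputo_integrand \<beta> t p x)
      - t * integral {0<..} (\<lambda>u. caputo_integrand \<beta> t (pderiv p) x u - caputo_integrand (\<beta> + 1) t p x u)
    = - integral {0<..} (caputo_integrand \<beta> t (smult t (pderiv p) - [:0, 1:] * p) x)"
proof -
  have "caputo_integrand \<gamma> t q x integrable_on {0<..}" if "\<gamma> > 0" for \<gamma> q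
    using absolutely_integrable_caputo_integrand[OF that t] by (simp add: absolutely_integrable_on_def)
  then have "caputo_integrand \<beta> t p x integrable_on {0<..}"
    "caputo_integrand \<beta> t (pderiv p) x integrable_on {0<..}"
    "caputo_integrand (\<beta> + 1) t p x integrable_on {0<..}"
    using b by simp_all
  then have "x * integral {0<..} (caputo_integrand \<beta> t p x)
      - t * integral {0<..} (\<lambda>u. caputo_integrand \<beta> t (pderiv p) x u - caputo_integrand (\<beta> + 1) t p x u)
    = integral {0<..} (\<lambda>u. x * caputo_integrand \<beta> t p x u
        - t * (caputo_integrand \<beta> t (pderiv p) x u - caputo_integrand (\<beta> + 1) t p x u))"
    by (simp add: integral_diff integrable_diff integrable_on_mult_right)
  also have "\<dots> = integral {0<..} (\<lambda>u. - caputo_integrand \<beta> t (smult t (pderiv p) - [:0, 1:] * p) x u)"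
  proof (rule integral_cong)
    fix u :: real assume "u \<in> {0<..}"
    then have "u powr (\<beta> + 1 - 1) = u powr (\<beta> - 1) * u"
      using powr_add[of u "\<beta> - 1" 1] by simp
    then show "x * caputo_integrand \<beta> t p x u - t * (caputo_integrand \<beta> t (pderiv p) x u
        - caputo_integrand (\<beta> + 1) t p x u) = - caputo_integrand \<beta> t (smult t (pderiv p) - [:0, 1:] * p) x u"
      unfolding caputo_integrand_def by (simp add: algebra_simps)
  qed
  finally show ?thesis
    by (simp add: integral_neg)
qed

lemma calH_nonint:
  assumes b: "\<beta> > 0" and t: "t > 0"
  shows "calH (real j - \<beta>) x t
    = (-1)^j / Gamma \<beta> * integral {0<..} (caputo_integrand \<beta> t (kernel_deriv_poly t j) x)"
proof (induction j arbitrary: x)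
  case 0
  have "Gamma \<beta> > 0" using b by (rule Gamma_real_pos)
  then show ?case
    using integral_unique[OF calH_neg_has_integral[OF b t, of x]] by (simp add: caputo_integrand_one)
next
  case (Suc j)
  define c where "c = (-1)^j / Gamma \<beta>"
  define p where "p = kernel_deriv_poly t j"
  define D where "D = integral {0<..} (\<lambda>u. caputo_integrand \<beta> t (pderiv p) x u - caputo_integrand (\<beta> + 1) t p x u)"
  have "(\<lambda>y. calH (real j - \<beta>) y t) = (\<lambda>y. c * integral {0<..} (caputo_integrand \<beta> t p y))"
    using Suc.IH unfolding c_def p_def by blast
  moreover have "((\<lambda>y. integral {0<..} (caputo_integrand \<beta> t p y)) has_real_derivative D) (at x)"
    unfolding D_def by (rule integral_caputo_integrand_has_real_derivative[OF b t])
  ultimately have "deriv (\<lambda>y. calH (real j - \<beta>) y t) x = c * D"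
    by (auto intro: DERIV_imp_deriv DERIV_cmult)
  then have "calH (real (Suc j) - \<beta>) x t = c * (x * integral {0<..} (caputo_integrand \<beta> t p x) - t * D)"
    using calH_recurrence[OF t, of "real (Suc j) - \<beta>" x] Suc.IH[of x]
    by (simp add: c_def p_def algebra_simps)
  also have "\<dots> = (-1)^Suc j / Gamma \<beta> * integral {0<..} (caputo_integrand \<beta> t (kernel_deriv_poly t (Suc j)) x)"
    unfolding D_def integral_caputo_integrand_rec[OF b t] by (simp add: c_def p_def)
  finally show ?case .
qed

section \<open>The pairing with \<open>\<L>\<^sup>-\<^sup>1{y\<^sup>\<alpha>}\<close>\<close>

lemma set_borel_integral_eq_integral_absolutely_integrable:
  fixes f :: "real \<Rightarrow> real"
  assumes "f absolutely_integrable_on S" "f \<in> borel_measurable borel" "S \<in> sets borel"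
  shows "(LINT u:S|lborel. f u) = integral S f"
proof (rule set_borel_integral_eq_integral(2))
  have "(\<lambda>u. indicator S u *\<^sub>R f u) \<in> borel_measurable lborel"
    using assms(2,3) by measurable
  then show "set_integrable lborel S f"
    using assms(1) integrable_completion unfolding set_integrable_def by blast
qed

lemma inv_laplace_pow_pair_neg:
  assumes \<alpha>: "\<alpha> < 0" and t: "t > 0"
  shows "inv_laplace_pow_pair \<alpha> (appell_kernel t x) = calH \<alpha> x t"
proof -
  have s: "-\<alpha> > 0" using \<alpha> by simp
  have "(\<lambda>u. u powr (-\<alpha> - 1) * appell_kernel t x u) absolutely_integrable_on {0<..}"
    using absolutely_integrable_caputo_integrand[OF s t, of 1 x] by (simp add: caputo_integrand_one)
  moreover have "(\<lambda>u. u powr (-\<alpha> - 1) * appell_kernel t x u) \<in> borel_measurable borel"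
    unfolding appell_kernel_def by measurable
  ultimately have "(LINT u:{0<..}|lborel. u powr (-\<alpha> - 1) * appell_kernel t x u) = Gamma (-\<alpha>) * calH \<alpha> x t"
    using set_borel_integral_eq_integral_absolutely_integrable integral_unique[OF calH_neg_has_integral[OF s t]]
    by simp
  moreover have "Gamma (-\<alpha>) \<noteq> 0" using Gamma_real_pos[OF s] by simp
  ultimately show ?thesis
    using \<alpha> by (simp add: inv_laplace_pow_pair_def)
qed

lemma inv_laplace_pow_pair_nonint:
  assumes \<alpha>: "\<alpha> \<ge> 0" "\<alpha> \<notin> \<nat>" and t: "t > 0"
  shows "inv_laplace_pow_pair \<alpha> (appell_kernel t x) = calH \<alpha> x t"
proof -
  define n where "n = nat \<lceil>\<alpha>\<rceil>"
  define \<beta> where "\<beta> = real n - \<alpha>"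
  have "real n \<noteq> \<alpha>" using \<alpha>(2) by (metis of_nat_in_Nats)
  then have b: "\<beta> > 0"
    using \<alpha>(1) unfolding \<beta>_def n_def by (simp add: le_of_int_ceiling order_le_neq_trans)
  have integrand: "(\<lambda>u. u powr (real n - \<alpha> - 1) * (deriv ^^ n) (appell_kernel t x) u)
      = caputo_integrand \<beta> t (kernel_deriv_poly t n) x"
    by (simp add: fun_eq_iff higher_deriv_appell_kernel caputo_integrand_def \<beta>_def mult_ac)
  have [measurable]: "(\<lambda>u. poly q (x + t*u)) \<in> borel_measurable borel" for q :: "real poly"
    by (intro borel_measurable_continuous_onI continuous_intros)
  have "caputo_integrand \<beta> t (kernel_deriv_poly t n) x \<in> borel_measurable borel"
    unfolding caputo_integrand_def appell_kernel_def by measurable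
  then have "(LINT u:{0<..}|lborel. u powr (real n - \<alpha> - 1) * (deriv ^^ n) (appell_kernel t x) u)
      = integral {0<..} (caputo_integrand \<beta> t (kernel_deriv_poly t n) x)"
    unfolding integrand
    by (intro set_borel_integral_eq_integral_absolutely_integrable absolutely_integrable_caputo_integrand b t)
       (auto intro: borel_open)
  then have "inv_laplace_pow_pair \<alpha> (appell_kernel t x) = calH (real n - \<beta>) x t"
    using \<alpha> calH_nonint[OF b t, of n x] by (simp add: inv_laplace_pow_pair_def n_def Let_def \<beta>_def)
  then show ?thesis
    by (simp add: \<beta>_def)
qed

theorem theorem3:
  fixes \<alpha> t x :: real
  assumes "t > 0"
  shows "calH \<alpha> x t = appell_W_pow \<alpha> t x
       \<and> appell_W_pow \<alpha> t x = inv_laplace_pow_pair \<alpha> (\<lambda>u. exp (- u * x - u^2 / 2 * t))"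
proof -
  consider "\<alpha> < 0" | n where "\<alpha> = real n" | "\<alpha> \<ge> 0" "\<alpha> \<notin> \<nat>"
    by (metis Nats_cases not_less)
  then have "inv_laplace_pow_pair \<alpha> (appell_kernel t x) = calH \<alpha> x t"
    by cases (use inv_laplace_pow_pair_neg inv_laplace_pow_pair_nat inv_laplace_pow_pair_nonint assms in auto)
  moreover have "appell_kernel t x = (\<lambda>u. exp (- u * x - u^2 / 2 * t))"
    by (simp add: appell_kernel_def [abs_def])
  ultimately show ?thesis
    by (simp add: appell_W_pow_def)
qed

end
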